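(* For every $k\in\omega\setminus\{0\}$, $h^d(T_k)\ge k-1$, where $h$ is the depth.
   Context: Notation: $\omega=\{0,1,2,\dots\}$; $\mathcal P(\omega)$ is the set of nonempty finite subsets of $\omega$; $E_2=\{0,1\}$. $P=\{f_i:i\in\omega\}$ is a set of attributes. Decision tables: $\mathcal M_2^\infty$ is the set of rectangular tables filled with numbers from $E_2$, whose columns are labeled with pairwise different attributes from $P$, whose rows are pairwise different, and each row of which is labeled with a set from $\mathcal P(\omega)$ (its set of decisions). The empty table is denoted $\Lambda$. For $T\in\mathcal M_2^\infty$: $\Pi(T)$ is the intersection of the decision sets of all rows (common decisions); $\mathrm{At}(T)$ is the set of attributes labeling columns. For nonempty $T$ and a word $\alpha=(f_{i_1},\delta_1)\cdots(f_{i_m},\delta_m)$ with $f_{i_j}\in\mathrm{At}(T)$, $\delta_j\in E_2$, $T\alpha$ is the subtable consisting of the rows having value $\delta_j$ in column $f_{i_j}$ for all $j$; $T\lambda=T$ for the empty word $\lambda$. Decision trees: a $2$-decision tree is a finite directed rooted tree with at least two nodes in which the root and the edges leaving the root are unlabeled, each terminal node is labeled with a decision from $\omega$, and each other node is labeled with an attribute from $P$, each edge leaving such a node being labeled with a number from $E_2$. $\mathrm{At}(\Gamma)$ is the set of attributes labeling nodes of $\Gamma$. For a complete path $\tau=v_1,d_1,\dots,v_m,d_m,v_{m+1}$ (from the root to a terminal node), $\pi(\tau)=\lambda$ if $m=1$, and otherwise $\pi(\tau)=(f_{i_2},\delta_2)\cdots(f_{i_m},\delta_m)$ where $v_j$ is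 labeled $f_{i_j}$ and $d_j$ is labeled $\delta_j$; $T(\tau)=T\pi(\tau)$. For $T\ne\Lambda$, a deterministic decision tree for $T$ is a $2$-decision tree $\Gamma$ with $\mathrm{At}(\Gamma)\subseteq\mathrm{At}(T)$ in which exactly one edge leaves the root, edges leaving any node that is neither the root nor terminal are labeled with pairwise different numbers, every row of $T$ belongs to $T(\tau)$ for some complete path $\tau$, and for every complete path $\tau$ either $T(\tau)=\Lambda$ or the decision at the terminal node of $\tau$ belongs to $\Pi(T(\tau))$. The depth of $\Gamma$ is $h(\Gamma)=\max_\tau|\pi(\tau)|$; $h^d(T)$ is the minimum depth of a deterministic decision tree for $T$. The graph $G_k$ and table $T_k$ ($k\ge1$): $G_k$ is a directed graph whose nodes are arranged in $k$ layers, layer $s$ ($1\le s\le k$) containing $s$ nodes; the nodes are numbered $1,\dots,m(k)$, $m(k)=k(k+1)/2$, layer by layer from the top and from left to right within a layer (so the $j$th node of layer $s$ has number $s(s-1)/2+j$). For a node $i$ that is the $j$th node of layer $s<k$, its left child $l(i)$ is the $j$th node of layer $s+1$ and its right child $p(i)$ is the $(j+1)$th node of layer $s+1$; the edges of $G_k$ go from each node to its two children. Define $\nu_k:E_2^{m(k)}\to\mathcal P(\omega)$: for $\bar\delta=(\delta_1,\dots,\delta_{m(k)})$, $\nu_k(\bar\delta)\subseteq\{0,1,\dots,m(k)\}$, where $0\in\nu_k(\bar\delta)$ iff $\delta_1=0$; for a node $i$ not in layer $k$, $i\in\nu_k(\bar\delta)$ iff $\delta_i=1$ and $\delta_{l(i)}=\delta_{p(i)}=0$;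 for a node $i$ in layer $k$, $i\in\nu_k(\bar\delta)$ iff $\delta_i=1$. $T_k\in\mathcal M_2^\infty$ is the table with $m(k)$ columns labeled $f_1,\dots,f_{m(k)}$ (column $f_i$ corresponding to node $i$), whose rows are all $2^{m(k)}$ tuples of $E_2^{m(k)}$, each row $\bar\delta$ labeled with $\nu_k(\bar\delta)$. *)

theory Defs
  imports Main
begin

text \<open>Attribute f_i is represented by the natural number i; E_2 = {0,1} as naturals.
A row is a function nat => nat (value at attribute i; irrelevant outside the columns,
fixed to 0 there for the tables considered).\<close>

datatype table = Table (tatt: "nat set") (trows: "(nat \<Rightarrow> nat) set")
                       (tdec: "(nat \<Rightarrow> nat) \<Rightarrow> nat set")

definition sub :: "table \<Rightarrow> (nat \<times> nat) list \<Rightarrow> table" where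
  "sub T \<alpha> = Table (tatt T) {r \<in> trows T. \<forall>(f, v) \<in> set \<alpha>. r f = v} (tdec T)"

definition Pi_dec :: "table \<Rightarrow> nat set" where
  "Pi_dec T = (\<Inter>r \<in> trows T. tdec T r)"

text \<open>Decision trees below the (unlabelled) root: the unique child of the root is the
argument. A terminal node carries a decision; a working node carries an attribute and
optionally an edge labelled 0 and an edge labelled 1 (so outgoing edge labels are
pairwise different).\<close>
datatype dtree = Leaf nat | Node nat "dtree option" "dtree option"

fun wf_tree :: "dtree \<Rightarrow> bool" where
  "wf_tree (Leaf d) = True"
| "wf_tree (Node f l r) =
     ((l \<noteq> None \<or> r \<noteq> None) \<and> (\<forall>t. l = Some t \<longrightarrow> wf_tree t) \<and> (\<forall>t. r = Some t \<longrightarrow> wf_tree t))"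

fun tree_atts :: "dtree \<Rightarrow> nat set" where
  "tree_atts (Leaf d) = {}"
| "tree_atts (Node f l r) = {f} \<union> (case l of None \<Rightarrow> {} | Some t \<Rightarrow> tree_atts t)
                               \<union> (case r of None \<Rightarrow> {} | Some t \<Rightarrow> tree_atts t)"

fun paths :: "dtree \<Rightarrow> ((nat \<times> nat) list \<times> nat) set" where
  "paths (Leaf d) = {([], d)}"
| "paths (Node f l r) =
     (case l of None \<Rightarrow> {} | Some t \<Rightarrow> (\<lambda>(p, d). ((f, 0) # p, d)) ` paths t)
   \<union> (case r of None \<Rightarrow> {} | Some t \<Rightarrow> (\<lambda>(p, d). ((f, 1) # p, d)) ` paths t)"

definition depth :: "dtree \<Rightarrow> nat" where
  "depth \<Gamma> = Max ((\<lambda>(p, d). length p) ` paths \<Gamma>)"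

definition det_tree :: "table \<Rightarrow> dtree \<Rightarrow> bool" where
  "det_tree T \<Gamma> \<longleftrightarrow>
     wf_tree \<Gamma> \<and> tree_atts \<Gamma> \<subseteq> tatt T
   \<and> (\<forall>r \<in> trows T. \<exists>(p, d) \<in> paths \<Gamma>. r \<in> trows (sub T p))
   \<and> (\<forall>(p, d) \<in> paths \<Gamma>. trows (sub T p) = {} \<or> d \<in> Pi_dec (sub T p))"

definition h_det :: "table \<Rightarrow> nat" where
  "h_det T = (LEAST n. \<exists>\<Gamma>. det_tree T \<Gamma> \<and> depth \<Gamma> = n)"

text \<open>The graph G_k and table T_k. Node j of layer s has number idx s j.\<close>
definition m :: "nat \<Rightarrow> nat" where "m k = k * (k + 1) div 2"

definition idx :: "nat \<Rightarrow> nat \<Rightarrow> nat" where "idx s j = s * (s - 1) div 2 + j"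

definition nu :: "nat \<Rightarrow> (nat \<Rightarrow> nat) \<Rightarrow> nat set" where
  "nu k \<delta> =
     {0 | _::unit. \<delta> 1 = 0}
   \<union> {idx s j | s j. 1 \<le> s \<and> s < k \<and> 1 \<le> j \<and> j \<le> s \<and> \<delta> (idx s j) = 1
                 \<and> \<delta> (idx (s + 1) j) = 0 \<and> \<delta> (idx (s + 1) (j + 1)) = 0}
   \<union> {idx k j | j. 1 \<le> j \<and> j \<le> k \<and> \<delta> (idx k j) = 1}"

definition Tk :: "nat \<Rightarrow> table" where
  "Tk k = Table {1..m k}
     {r. (\<forall>i \<in> {1..m k}. r i \<in> {0, 1}) \<and> (\<forall>i. i \<notin> {1..m k} \<longrightarrow> r i = 0)}
     (nu k)"

end

theory Submission
  imports Defs
begin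

text \<open>An adversary answers the queries of any decision tree for \<open>T\<^sub>k\<close>. It answers 0 to
attribute \<open>f\<^sub>i\<close> unless that would block every root-to-bottom path of \<open>G\<^sub>k\<close> avoiding the
nodes answered 0, and 1 otherwise. Then the indicator row of every such open path is
consistent with all answers, and the decision set of that row is exactly the path's bottom
node. Blocking all bottom nodes but one needs at least \<open>k - 1\<close> zeros, since the open path can
be bent to end at any other bottom node, and the node where the bent path is blocked
determines that bottom node. So after fewer than \<open>k - 1\<close> queries two open paths end at
different bottom nodes; deleting the bottom node from one path row gives a consistent row
whose decision set misses it, and no common decision exists yet.\<close>

section \<open>Adversary lower bounds for decision trees\<close>

lemma trows_sub: "trows (sub T \<alpha>) = {r \<in> trows T. \<forall>(f, v) \<in> set \<alpha>. r f = v}"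
  by (simp add: sub_def)

lemma trows_sub_snoc: "trows (sub T (\<alpha> @ [(f, v)])) = {r \<in> trows (sub T \<alpha>). r f = v}"
  by (auto simp: trows_sub)

lemma tdec_sub [simp]: "tdec (sub T \<alpha>) = tdec T"
  by (simp add: sub_def)

definition solves :: "table \<Rightarrow> (nat \<times> nat) list \<Rightarrow> dtree \<Rightarrow> bool" where
  "solves T \<alpha> \<Gamma> \<longleftrightarrow>
     (\<forall>r \<in> trows (sub T \<alpha>). \<exists>(p, d) \<in> paths \<Gamma>. r \<in> trows (sub T (\<alpha> @ p)))
   \<and> (\<forall>(p, d) \<in> paths \<Gamma>. trows (sub T (\<alpha> @ p)) = {} \<or> d \<in> Pi_dec (sub T (\<alpha> @ p)))"

lemma det_tree_iff_solves:
  "det_tree T \<Gamma> \<longleftrightarrow> wf_tree \<Gamma> \<and> tree_atts \<Gamma> \<subseteq> tatt T \<and> solves T [] \<Gamma>"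
  by (simp add: det_tree_def solves_def trows_sub)

definition branch :: "dtree option \<Rightarrow> dtree option \<Rightarrow> nat \<Rightarrow> dtree option" where
  "branch l r v = (if v = 0 then l else if v = 1 then r else None)"

lemma paths_Node:
  "(q, d) \<in> paths (Node f l r) \<longleftrightarrow>
     (\<exists>v t p. q = (f, v) # p \<and> branch l r v = Some t \<and> (p, d) \<in> paths t)"
  by (auto simp: branch_def split: option.splits)

lemma solves_Leaf:
  assumes "solves T \<alpha> (Leaf d)" "trows (sub T \<alpha>) \<noteq> {}"
  shows "d \<in> Pi_dec (sub T \<alpha>)"
  using assms by (simp add: solves_def)

lemma solves_Node:
  assumes solves: "solves T \<alpha> (Node f l r)" and nonempty: "trows (sub T (\<alpha> @ [(f, v)])) \<noteq> {}"
  shows "\<exists>t. branch l r v = Some t \<and> solves T (\<alpha> @ [(f, v)]) t"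
proof -
  have covered: "\<exists>t p d. branch l r v = Some t \<and> (p, d) \<in> paths t \<and> x \<in> trows (sub T (\<alpha> @ (f, v) # p))"
    if "x \<in> trows (sub T (\<alpha> @ [(f, v)]))" for x
  proof -
    from that have "x \<in> trows (sub T \<alpha>)" and "x f = v" by (auto simp: trows_sub)
    then obtain q d where "(q, d) \<in> paths (Node f l r)" "x \<in> trows (sub T (\<alpha> @ q))"
      using solves unfolding solves_def by blast
    moreover from this(1) obtain v' t p where "q = (f, v') # p" "branch l r v' = Some t" "(p, d) \<in> paths t"
      using paths_Node by blast
    moreover have "v' = v"
      using calculation \<open>x f = v\<close> by (simp add: trows_sub)
    ultimately show ?thesis by blast
  qed
  obtain t where t: "branch l r v = Some t"
    using nonempty covered by blast
  have "solves T (\<alpha> @ [(f, v)]) t"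
    unfolding solves_def
  proof (intro conjI ballI)
    fix x assume "x \<in> trows (sub T (\<alpha> @ [(f, v)]))"
    with covered t show "\<exists>(p, d) \<in> paths t. x \<in> trows (sub T ((\<alpha> @ [(f, v)]) @ p))"
      by fastforce
  next
    fix pd assume "pd \<in> paths t"
    moreover obtain p d where "pd = (p, d)" by fastforce
    ultimately have "((f, v) # p, d) \<in> paths (Node f l r)"
      using t by (auto simp: paths_Node simp del: paths.simps)
    then show "case pd of (p, d) \<Rightarrow>
        trows (sub T ((\<alpha> @ [(f, v)]) @ p)) = {} \<or> d \<in> Pi_dec (sub T ((\<alpha> @ [(f, v)]) @ p))"
      using solves \<open>pd = (p, d)\<close> unfolding solves_def by fastforce
  qed
  with t show ?thesis by blast
qed

lemma adversary_long_path:
  assumes "P \<alpha>" "solves T \<alpha> \<Gamma>"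
    and extend: "\<And>\<alpha> f. P \<alpha> \<Longrightarrow> \<exists>v. P (\<alpha> @ [(f, v)])"
    and consistent: "\<And>\<alpha>. P \<alpha> \<Longrightarrow> trows (sub T \<alpha>) \<noteq> {}"
    and undecided: "\<And>\<alpha>. P \<alpha> \<Longrightarrow> length \<alpha> < n \<Longrightarrow> Pi_dec (sub T \<alpha>) = {}"
  shows "\<exists>(p, d) \<in> paths \<Gamma>. n \<le> length \<alpha> + length p"
  using assms(1,2)
proof (induction \<Gamma> arbitrary: \<alpha>)
  case (Leaf d)
  then have "n \<le> length \<alpha>"
    using solves_Leaf consistent undecided by (metis empty_iff not_le)
  then show ?case by simp
next
  case (Node f l r)
  obtain v where v: "P (\<alpha> @ [(f, v)])"
    using extend Node.prems(1) by blast
  then obtain t where t: "branch l r v = Some t" "solves T (\<alpha> @ [(f, v)]) t"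
    using solves_Node Node.prems(2) consistent by blast
  then have "t \<in> set_option l \<or> t \<in> set_option r"
    by (auto simp: branch_def split: if_splits)
  then obtain p d where "(p, d) \<in> paths t" "n \<le> length (\<alpha> @ [(f, v)]) + length p"
    using Node.IH v t(2) by blast
  moreover from this(1) t(1) have "((f, v) # p, d) \<in> paths (Node f l r)"
    by (auto simp: paths_Node simp del: paths.simps)
  ultimately show ?case by (intro bexI[of _ "((f, v) # p, d)"]) auto
qed

lemma finite_paths: "finite (paths \<Gamma>)"
  by (induction \<Gamma>) (auto split: option.splits)

lemma length_le_depth: "(p, d) \<in> paths \<Gamma> \<Longrightarrow> length p \<le> depth \<Gamma>"
  unfolding depth_def using finite_paths by (force intro: Max_ge)

lemma adversary_depth_bound:
  assumes "P []" "det_tree T \<Gamma>"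
    and "\<And>\<alpha> f. P \<alpha> \<Longrightarrow> \<exists>v. P (\<alpha> @ [(f, v)])"
    and "\<And>\<alpha>. P \<alpha> \<Longrightarrow> trows (sub T \<alpha>) \<noteq> {}"
    and "\<And>\<alpha>. P \<alpha> \<Longrightarrow> length \<alpha> < n \<Longrightarrow> Pi_dec (sub T \<alpha>) = {}"
  shows "n \<le> depth \<Gamma>"
proof -
  have "solves T [] \<Gamma>"
    using assms(2) by (simp add: det_tree_iff_solves)
  then have "\<exists>(p, d) \<in> paths \<Gamma>. n \<le> length ([] :: (nat \<times> nat) list) + length p"
    by (rule adversary_long_path[OF assms(1) _ assms(3-5)])
  then obtain p d where "(p, d) \<in> paths \<Gamma>" "n \<le> length p"
    by auto
  then show ?thesis
    using length_le_depth by fastforce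
qed

section \<open>Decision trees querying every attribute\<close>

lemma solves_NodeI:
  assumes "solves T (\<alpha> @ [(f, 0)]) t0" "solves T (\<alpha> @ [(f, 1)]) t1"
    and binary: "\<forall>r \<in> trows (sub T \<alpha>). r f \<in> {0, 1}"
  shows "solves T \<alpha> (Node f (Some t0) (Some t1))"
  unfolding solves_def
proof (intro conjI ballI)
  fix r assume r: "r \<in> trows (sub T \<alpha>)"
  with binary have "r \<in> trows (sub T (\<alpha> @ [(f, r f)]))" "r f \<in> {0, 1}"
    by (auto simp: trows_sub)
  with assms(1,2) obtain p d where "(p, d) \<in> paths (if r f = 0 then t0 else t1)"
      "r \<in> trows (sub T ((\<alpha> @ [(f, r f)]) @ p))"
    unfolding solves_def by (cases "r f = 0") fastforce+
  moreover from this(1) \<open>r f \<in> {0, 1}\<close> have "((f, r f) # p, d) \<in> paths (Node f (Some t0) (Some t1))"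
    by (auto split: if_splits)
  ultimately show "\<exists>(p, d) \<in> paths (Node f (Some t0) (Some t1)). r \<in> trows (sub T (\<alpha> @ p))"
    by (intro bexI[of _ "((f, r f) # p, d)"]) auto
next
  fix pd assume "pd \<in> paths (Node f (Some t0) (Some t1))"
  then show "case pd of (p, d) \<Rightarrow> trows (sub T (\<alpha> @ p)) = {} \<or> d \<in> Pi_dec (sub T (\<alpha> @ p))"
    using assms(1,2) unfolding solves_def by fastforce
qed

fun full_tree :: "table \<Rightarrow> (nat \<times> nat) list \<Rightarrow> nat list \<Rightarrow> dtree" where
  "full_tree T \<alpha> [] = Leaf (SOME d. d \<in> Pi_dec (sub T \<alpha>))"
| "full_tree T \<alpha> (f # fs) =
     Node f (Some (full_tree T (\<alpha> @ [(f, 0)]) fs)) (Some (full_tree T (\<alpha> @ [(f, 1)]) fs))"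

lemma wf_full_tree: "wf_tree (full_tree T \<alpha> L)"
  by (induction L arbitrary: \<alpha>) auto

lemma tree_atts_full_tree: "tree_atts (full_tree T \<alpha> L) \<subseteq> set L"
  by (induction L arbitrary: \<alpha>) auto

lemma solves_full_tree:
  assumes binary: "\<And>r f. r \<in> trows T \<Longrightarrow> f \<in> set L \<Longrightarrow> r f \<in> {0, 1}"
    and decided: "\<And>\<beta>. tatt T \<subseteq> fst ` set \<beta> \<Longrightarrow> trows (sub T \<beta>) \<noteq> {} \<Longrightarrow> Pi_dec (sub T \<beta>) \<noteq> {}"
    and "tatt T \<subseteq> set L \<union> fst ` set \<alpha>"
  shows "solves T \<alpha> (full_tree T \<alpha> L)"
  using binary assms(3)
proof (induction L arbitrary: \<alpha>)
  case Nil
  then have "trows (sub T \<alpha>) = {} \<or> (SOME d. d \<in> Pi_dec (sub T \<alpha>)) \<in> Pi_dec (sub T \<alpha>)"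
    using decided[of \<alpha>] by (auto simp: some_in_eq)
  then show ?case by (simp add: solves_def)
next
  case (Cons f L)
  have "tatt T \<subseteq> set L \<union> fst ` set (\<alpha> @ [(f, v)])" for v
    using Cons.prems(2) by auto
  then have "solves T (\<alpha> @ [(f, v)]) (full_tree T (\<alpha> @ [(f, v)]) L)" for v
    using Cons.IH Cons.prems(1) by simp
  moreover have "\<forall>r \<in> trows (sub T \<alpha>). r f \<in> {0, 1}"
    using Cons.prems(1) by (simp add: trows_sub)
  ultimately show ?case
    by (simp add: solves_NodeI)
qed

lemma det_tree_exists:
  assumes "finite (tatt T)"
    and binary: "\<And>r f. r \<in> trows T \<Longrightarrow> f \<in> tatt T \<Longrightarrow> r f \<in> {0, 1}"
    and determined: "\<And>r r'. r \<in> trows T \<Longrightarrow> r' \<in> trows T \<Longrightarrow> \<forall>f \<in> tatt T. r f = r' f \<Longrightarrow> r = r'"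
    and nonempty: "\<And>r. r \<in> trows T \<Longrightarrow> tdec T r \<noteq> {}"
  shows "\<exists>\<Gamma>. det_tree T \<Gamma>"
proof -
  define L where "L = sorted_list_of_set (tatt T)"
  have set_L: "set L = tatt T"
    using assms(1) by (simp add: L_def)
  have "Pi_dec (sub T \<beta>) \<noteq> {}"
    if covers: "tatt T \<subseteq> fst ` set \<beta>" and rows: "trows (sub T \<beta>) \<noteq> {}" for \<beta>
  proof -
    obtain r where r: "r \<in> trows (sub T \<beta>)"
      using rows by blast
    have "r' = r" if r': "r' \<in> trows (sub T \<beta>)" for r'
    proof (rule determined)
      show "\<forall>f \<in> tatt T. r' f = r f"
      proof
        fix f assume "f \<in> tatt T"
        then obtain v where "(f, v) \<in> set \<beta>"
          using covers by force
        with r r' show "r' f = r f" by (auto simp: trows_sub)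
      qed
    qed (use r r' in \<open>auto simp: trows_sub\<close>)
    with r have "trows (sub T \<beta>) = {r}" by blast
    then have "Pi_dec (sub T \<beta>) = tdec T r"
      by (simp add: Pi_dec_def)
    moreover have "r \<in> trows T"
      using r by (simp add: trows_sub)
    ultimately show ?thesis
      using nonempty by simp
  qed
  then have "solves T [] (full_tree T [] L)"
    using binary set_L by (intro solves_full_tree) auto
  moreover have "tree_atts (full_tree T [] L) \<subseteq> tatt T"
    using tree_atts_full_tree set_L by metis
  ultimately have "det_tree T (full_tree T [] L)"
    by (simp add: det_tree_iff_solves wf_full_tree)
  then show ?thesis ..
qed

lemma h_det_lower_bound:
  assumes "\<exists>\<Gamma>. det_tree T \<Gamma>" "\<And>\<Gamma>. det_tree T \<Gamma> \<Longrightarrow> n \<le> depth \<Gamma>"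
  shows "n \<le> h_det T"
proof -
  have "\<exists>\<Gamma>. det_tree T \<Gamma> \<and> depth \<Gamma> = h_det T"
    unfolding h_det_def
    by (rule LeastI_ex[where P = "\<lambda>n. \<exists>\<Gamma>. det_tree T \<Gamma> \<and> depth \<Gamma> = n"]) (use assms(1) in blast)
  then show ?thesis by (metis assms(2))
qed

section \<open>The graph \<open>G\<^sub>k\<close> and the table \<open>T\<^sub>k\<close>\<close>

lemma triangle_succ: "s * (s + 1) div 2 = s * (s - 1) div 2 + (s::nat)"
  by (cases s) (simp_all add: algebra_simps)

lemma idx_bounds:
  assumes "1 \<le> j" "j \<le> s"
  shows "s * (s - 1) div 2 < idx s j" "idx s j \<le> s * (s + 1) div 2"
  using assms triangle_succ[of s] by (auto simp: idx_def)

lemma idx_less_idx: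
  assumes "1 \<le> j" "j \<le> s" "1 \<le> j'" "j' \<le> s'" "s < s'"
  shows "idx s j < idx s' j'"
proof -
  have "idx s j \<le> (s + 1) * ((s + 1) - 1) div 2"
    using idx_bounds assms by (simp add: mult.commute)
  also have "\<dots> \<le> s' * (s' - 1) div 2"
    using assms by (intro div_le_mono mult_le_mono) auto
  also have "\<dots> < idx s' j'"
    using idx_bounds assms by auto
  finally show ?thesis .
qed

lemma idx_eq_idx_iff:
  assumes "1 \<le> j" "j \<le> s" "1 \<le> j'" "j' \<le> s'"
  shows "idx s j = idx s' j' \<longleftrightarrow> s = s' \<and> j = j'"
  using idx_less_idx[of j s j' s'] idx_less_idx[of j' s' j s] assms
  by (cases s s' rule: linorder_cases) (auto simp: idx_def)

lemma idx_mem_atts: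
  assumes "1 \<le> j" "j \<le> s" "s \<le> k"
  shows "idx s j \<in> {1..m k}"
proof -
  have "idx s j \<le> s * (s + 1) div 2"
    using idx_bounds assms by auto
  also have "\<dots> \<le> k * (k + 1) div 2"
    using assms by (intro div_le_mono mult_le_mono) auto
  finally show ?thesis
    using assms by (auto simp: idx_def m_def)
qed

lemma trows_Tk:
  "r \<in> trows (Tk k) \<longleftrightarrow> (\<forall>i \<in> {1..m k}. r i \<in> {0, 1}) \<and> (\<forall>i. i \<notin> {1..m k} \<longrightarrow> r i = 0)"
  by (simp add: Tk_def)

lemma mem_nu_cases:
  assumes "d \<in> nu k r"
  obtains "d = 0" "r 1 = 0"
  | s j where "d = idx s j" "1 \<le> s" "s < k" "1 \<le> j" "j \<le> s" "r (idx s j) = 1"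
      "r (idx (s + 1) j) = 0" "r (idx (s + 1) (j + 1)) = 0"
  | j where "d = idx k j" "1 \<le> j" "j \<le> k" "r (idx k j) = 1"
  using assms unfolding nu_def Un_iff mem_Collect_eq by (elim disjE exE conjE) blast+

text \<open>A root-to-bottom path of \<open>G\<^sub>k\<close>, given by the position \<open>p s\<close> of its node in layer \<open>s\<close>.\<close>

definition descending_path :: "nat \<Rightarrow> (nat \<Rightarrow> nat) \<Rightarrow> bool" where
  "descending_path k p \<longleftrightarrow>
     p 1 = 1 \<and> (\<forall>s. 1 \<le> s \<and> s < k \<longrightarrow> p (Suc s) = p s \<or> p (Suc s) = Suc (p s))"

definition path_nodes :: "nat \<Rightarrow> (nat \<Rightarrow> nat) \<Rightarrow> nat set" where
  "path_nodes k p = {idx s (p s) | s. 1 \<le> s \<and> s \<le> k}"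

definition row_of :: "nat set \<Rightarrow> nat \<Rightarrow> nat" where
  "row_of S i = of_bool (i \<in> S)"

lemma row_of_eq_1_iff: "row_of S i = 1 \<longleftrightarrow> i \<in> S"
  by (simp add: row_of_def)

lemma row_of_eq_0_iff: "row_of S i = 0 \<longleftrightarrow> i \<notin> S"
  by (simp add: row_of_def)

lemma descending_path_start: "descending_path k p \<Longrightarrow> p 1 = 1"
  by (simp add: descending_path_def)

lemma descending_path_step:
  "descending_path k p \<Longrightarrow> 1 \<le> s \<Longrightarrow> s < k \<Longrightarrow> p (Suc s) = p s \<or> p (Suc s) = Suc (p s)"
  by (simp add: descending_path_def)

lemma descending_path_bounds:
  assumes "descending_path k p" "1 \<le> s" "s \<le> k"
  shows "1 \<le> p s \<and> p s \<le> s"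
  using assms(2,3)
proof (induction s rule: dec_induct)
  case base then show ?case
    using descending_path_start[OF assms(1)] by simp
next
  case (step s)
  with descending_path_step[OF assms(1), of s] show ?case by auto
qed

lemma path_nodes_subset_atts: "descending_path k p \<Longrightarrow> path_nodes k p \<subseteq> {1..m k}"
  using descending_path_bounds idx_mem_atts unfolding path_nodes_def by blast

lemma row_of_mem_Tk: "S \<subseteq> {1..m k} \<Longrightarrow> row_of S \<in> trows (Tk k)"
  by (auto simp: trows_Tk row_of_def)

lemma idx_mem_path_nodes_iff:
  assumes "descending_path k p" "1 \<le> j" "j \<le> s" "s \<le> k"
  shows "idx s j \<in> path_nodes k p \<longleftrightarrow> j = p s"
proof
  assume "idx s j \<in> path_nodes k p"
  then obtain s' where s': "1 \<le> s'" "s' \<le> k" "idx s j = idx s' (p s')"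
    unfolding path_nodes_def by blast
  with descending_path_bounds[OF assms(1) s'(1,2)] show "j = p s"
    using assms(2,3) by (simp add: idx_eq_idx_iff)
qed (use assms in \<open>auto simp: path_nodes_def\<close>)

lemma nu_path_row_subset:
  assumes p: "descending_path k p" and "k \<ge> 1"
  shows "nu k (row_of (path_nodes k p)) \<subseteq> {idx k (p k)}"
proof
  have on_path: "idx s (p s) \<in> path_nodes k p" if "1 \<le> s" "s \<le> k" for s
    using that by (auto simp: path_nodes_def)
  fix d assume "d \<in> nu k (row_of (path_nodes k p))"
  then show "d \<in> {idx k (p k)}"
  proof (cases rule: mem_nu_cases)
    case 1
    have "idx 1 (p 1) = 1"
      using descending_path_start[OF p] by (simp add: idx_def)
    with on_path[of 1] \<open>k \<ge> 1\<close> have "1 \<in> path_nodes k p"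
      by simp
    with 1 show ?thesis
      by (simp add: row_of_eq_0_iff)
  next
    case (2 s j)
    from \<open>row_of (path_nodes k p) (idx s j) = 1\<close> have "idx s j \<in> path_nodes k p"
      unfolding row_of_eq_1_iff .
    then have "j = p s"
      using 2 idx_mem_path_nodes_iff[OF p] by simp
    moreover have "p (s + 1) = p s \<or> p (s + 1) = p s + 1"
      using 2 descending_path_step[OF p] by simp
    moreover have "idx (s + 1) j \<notin> path_nodes k p" "idx (s + 1) (j + 1) \<notin> path_nodes k p"
      using 2(7,8) unfolding row_of_eq_0_iff .
    ultimately show ?thesis
      using on_path[of "s + 1"] 2 by auto
  next
    case (3 j)
    from \<open>row_of (path_nodes k p) (idx k j) = 1\<close> have "idx k j \<in> path_nodes k p"
      unfolding row_of_eq_1_iff .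
    then have "j = p k"
      using 3 idx_mem_path_nodes_iff[OF p] by simp
    with 3 show ?thesis
      by simp
  qed
qed

lemma endpoint_notin_nu_truncated_path_row:
  assumes p: "descending_path k p" and "k \<ge> 1"
  shows "idx k (p k) \<notin> nu k (row_of (path_nodes k p - {idx k (p k)}))"
proof
  have pk: "1 \<le> p k" "p k \<le> k"
    using descending_path_bounds[OF p] \<open>k \<ge> 1\<close> by auto
  assume "idx k (p k) \<in> nu k (row_of (path_nodes k p - {idx k (p k)}))"
  then show False
  proof (cases rule: mem_nu_cases)
    case 1
    then show False using pk by (simp add: idx_def)
  next
    case (2 s j)
    then show False
      using pk by (simp add: idx_eq_idx_iff)
  next
    case (3 j)
    from \<open>row_of (path_nodes k p - {idx k (p k)}) (idx k j) = 1\<close> show False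
      unfolding row_of_eq_1_iff \<open>idx k (p k) = idx k j\<close> by simp
  qed
qed

lemma descending_path_min:
  assumes "descending_path k p" "1 \<le> j"
  shows "descending_path k (\<lambda>s. min (p s) j)"
  unfolding descending_path_def
proof (intro conjI allI impI)
  show "min (p 1) j = 1"
    using assms(2) descending_path_start[OF assms(1)] by simp
  fix s assume "1 \<le> s \<and> s < k"
  then have "p (Suc s) = p s \<or> p (Suc s) = Suc (p s)"
    using assms(1) descending_path_step by blast
  then show "min (p (Suc s)) j = min (p s) j \<or> min (p (Suc s)) j = Suc (min (p s) j)"
    by (auto simp: min_def)
qed

lemma descending_path_max:
  assumes "descending_path k p" "j \<le> k"
  shows "descending_path k (\<lambda>s. max (p s) (j + s - k))"
  unfolding descending_path_def
proof (intro conjI allI impI)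
  show "max (p 1) (j + 1 - k) = 1"
    using assms(2) descending_path_start[OF assms(1)] by simp
  fix s assume "1 \<le> s \<and> s < k"
  then have "p (Suc s) = p s \<or> p (Suc s) = Suc (p s)"
    using assms(1) descending_path_step by blast
  moreover have "j + Suc s - k = j + s - k \<or> j + Suc s - k = Suc (j + s - k)"
    by arith
  ultimately show "max (p (Suc s)) (j + Suc s - k) = max (p s) (j + s - k)
      \<or> max (p (Suc s)) (j + Suc s - k) = Suc (max (p s) (j + s - k))"
    by (auto simp: max_def)
qed

definition open_paths :: "nat \<Rightarrow> nat set \<Rightarrow> (nat \<Rightarrow> nat) set" where
  "open_paths k Z = {p. descending_path k p \<and> path_nodes k p \<inter> Z = {}}"

lemma card_ge_if_open_paths_share_end:
  assumes p: "p \<in> open_paths k Z" and "finite Z" "k \<ge> 1"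
    and share_end: "\<And>q. q \<in> open_paths k Z \<Longrightarrow> q k = p k"
  shows "k - 1 \<le> card Z"
proof -
  have p_path: "descending_path k p" and avoids: "path_nodes k p \<inter> Z = {}"
    using p by (auto simp: open_paths_def)
  have pk: "1 \<le> p k" "p k \<le> k"
    using descending_path_bounds[OF p_path] \<open>k \<ge> 1\<close> by auto
  define blocked where "blocked = {(s, c). 1 \<le> c \<and> c \<le> s \<and> s \<le> k \<and> idx s c \<in> Z}"
  txt \<open>Bending \<open>p\<close> to end at \<open>j\<close> leaves \<open>p\<close> in column \<open>j\<close> (left of \<open>p\<close>) or on the diagonal
    \<open>c = j + s - k\<close> (right of \<open>p\<close>), so \<open>\<phi>\<close> recovers \<open>j\<close> from any node of the bent path off \<open>p\<close>.\<close>
  define \<phi> where "\<phi> = (\<lambda>(s, c). if c < p s then c else c + k - s)"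
  have "finite blocked"
    by (rule finite_subset[of _ "{0..k} \<times> {0..k}"]) (auto simp: blocked_def)
  have "card blocked \<le> card Z"
  proof (rule card_inj_on_le[of "case_prod idx"])
    show "inj_on (case_prod idx) blocked"
      unfolding blocked_def inj_on_def using idx_eq_idx_iff by auto
  qed (auto simp: blocked_def \<open>finite Z\<close>)
  have "{1..k} - {p k} \<subseteq> \<phi> ` blocked"
  proof
    fix j assume j: "j \<in> {1..k} - {p k}"
    obtain q where q: "descending_path k q" "q k = j" and q_\<phi>: "\<And>s. q s \<noteq> p s \<Longrightarrow> \<phi> (s, q s) = j"
    proof (cases "j < p k")
      case True
      show thesis
        by (rule that[of "\<lambda>s. min (p s) j"])
          (use True j p_path descending_path_min in \<open>auto simp: \<phi>_def\<close>)
    next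
      case False
      show thesis
        by (rule that[of "\<lambda>s. max (p s) (j + s - k)"])
          (use False j p_path descending_path_max in \<open>auto simp: \<phi>_def\<close>)
    qed
    then have "q \<notin> open_paths k Z"
      using share_end j by auto
    with q(1) obtain s where s: "1 \<le> s" "s \<le> k" "idx s (q s) \<in> Z"
      by (auto simp: open_paths_def path_nodes_def)
    have "q s \<noteq> p s"
      using avoids s by (auto simp: path_nodes_def)
    moreover have "(s, q s) \<in> blocked"
      using s descending_path_bounds[OF q(1)] by (simp add: blocked_def)
    ultimately show "j \<in> \<phi> ` blocked"
      using q_\<phi> by force
  qed
  have "k - 1 = card ({1..k} - {p k})"
    using pk by simp
  also have "\<dots> \<le> card (\<phi> ` blocked)"
    using \<open>{1..k} - {p k} \<subseteq> \<phi> ` blocked\<close> \<open>finite blocked\<close> by (intro card_mono) auto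
  also have "\<dots> \<le> card blocked"
    using \<open>finite blocked\<close> by (rule card_image_le)
  also have "\<dots> \<le> card Z"
    by fact
  finally show ?thesis .
qed

lemma open_paths_antimono: "Z \<subseteq> Z' \<Longrightarrow> open_paths k Z' \<subseteq> open_paths k Z"
  by (auto simp: open_paths_def)

definition zero_atts :: "(nat \<times> nat) list \<Rightarrow> nat set" where
  "zero_atts \<alpha> = {f. (f, 0) \<in> set \<alpha>}"

lemma finite_zero_atts: "finite (zero_atts \<alpha>)"
  and card_zero_atts_le: "card (zero_atts \<alpha>) \<le> length \<alpha>"
proof -
  have sub: "zero_atts \<alpha> \<subseteq> fst ` set \<alpha>"
    by (force simp: zero_atts_def)
  then show "finite (zero_atts \<alpha>)"
    by (rule finite_subset) simp
  have "card (zero_atts \<alpha>) \<le> card (fst ` set \<alpha>)"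
    using sub by (intro card_mono) auto
  also have "\<dots> \<le> length \<alpha>"
    using card_image_le[of "set \<alpha>" fst] card_length[of \<alpha>] by simp
  finally show "card (zero_atts \<alpha>) \<le> length \<alpha>" .
qed

definition adversary_inv :: "nat \<Rightarrow> (nat \<times> nat) list \<Rightarrow> bool" where
  "adversary_inv k \<alpha> \<longleftrightarrow> open_paths k (zero_atts \<alpha>) \<noteq> {}
     \<and> (\<forall>p \<in> open_paths k (zero_atts \<alpha>). row_of (path_nodes k p) \<in> trows (sub (Tk k) \<alpha>))"

lemma adversary_inv_Nil: "adversary_inv k []"
proof -
  have "descending_path k p \<Longrightarrow> row_of (path_nodes k p) \<in> trows (Tk k)" for p
    by (intro row_of_mem_Tk path_nodes_subset_atts)
  moreover have "(\<lambda>_. 1) \<in> open_paths k {}"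
    by (simp add: open_paths_def descending_path_def)
  ultimately show ?thesis
    by (auto simp: adversary_inv_def zero_atts_def open_paths_def trows_sub)
qed

lemma adversary_inv_snoc:
  assumes inv: "adversary_inv k \<alpha>"
  shows "\<exists>v. adversary_inv k (\<alpha> @ [(f, v)])"
proof (cases "open_paths k (insert f (zero_atts \<alpha>)) = {}")
  case False
  have "zero_atts (\<alpha> @ [(f, 0)]) = insert f (zero_atts \<alpha>)"
    by (auto simp: zero_atts_def)
  moreover have "open_paths k (insert f (zero_atts \<alpha>)) \<subseteq> open_paths k (zero_atts \<alpha>)"
    by (rule open_paths_antimono) auto
  moreover have "f \<notin> path_nodes k p" if "p \<in> open_paths k (insert f (zero_atts \<alpha>))" for p
    using that by (auto simp: open_paths_def)
  ultimately have "adversary_inv k (\<alpha> @ [(f, 0)])"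
    using False inv by (auto simp: adversary_inv_def trows_sub_snoc row_of_def)
  then show ?thesis ..
next
  case True
  have "zero_atts (\<alpha> @ [(f, 1)]) = zero_atts \<alpha>"
    by (auto simp: zero_atts_def)
  moreover have "f \<in> path_nodes k p" if "p \<in> open_paths k (zero_atts \<alpha>)" for p
    using that True by (auto simp: open_paths_def)
  ultimately have "adversary_inv k (\<alpha> @ [(f, 1)])"
    using inv by (auto simp: adversary_inv_def trows_sub_snoc row_of_def)
  then show ?thesis ..
qed

lemma adversary_inv_rows_nonempty: "adversary_inv k \<alpha> \<Longrightarrow> trows (sub (Tk k) \<alpha>) \<noteq> {}"
  by (auto simp: adversary_inv_def)

lemma adversary_inv_undecided:
  assumes inv: "adversary_inv k \<alpha>" and "length \<alpha> < k - 1"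
  shows "Pi_dec (sub (Tk k) \<alpha>) = {}"
proof -
  have short: "length \<alpha> + 1 < k"
    using \<open>length \<alpha> < k - 1\<close> by simp
  let ?Z = "zero_atts \<alpha>"
  obtain p where p: "p \<in> open_paths k ?Z"
    using inv by (auto simp: adversary_inv_def)
  have "\<not> k - 1 \<le> card ?Z"
    using card_zero_atts_le[of \<alpha>] short by linarith
  then obtain q where q: "q \<in> open_paths k ?Z" "q k \<noteq> p k"
    using card_ge_if_open_paths_share_end[OF p finite_zero_atts] short by force
  have p_path: "descending_path k p" and q_path: "descending_path k q"
    using p q by (auto simp: open_paths_def)
  let ?b = "idx k (p k)"
  let ?r = "row_of (path_nodes k p)" and ?r' = "row_of (path_nodes k p - {?b})"
  have rows: "?r \<in> trows (sub (Tk k) \<alpha>)" "row_of (path_nodes k q) \<in> trows (sub (Tk k) \<alpha>)"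
    using inv p q by (auto simp: adversary_inv_def)
  have "?b \<notin> path_nodes k q"
    using idx_mem_path_nodes_iff[OF q_path] descending_path_bounds[OF p_path] q(2) short by auto
  then have "?r' f = (if f = ?b then row_of (path_nodes k q) f else ?r f)" for f
    by (simp add: row_of_def)
  moreover have "?r' \<in> trows (Tk k)"
    using path_nodes_subset_atts[OF p_path] by (intro row_of_mem_Tk) auto
  ultimately have "?r' \<in> trows (sub (Tk k) \<alpha>)"
    using rows by (auto simp: trows_sub)
  moreover have "nu k ?r \<subseteq> {?b}" "?b \<notin> nu k ?r'"
    using nu_path_row_subset endpoint_notin_nu_truncated_path_row p_path short by auto
  ultimately show ?thesis
    using rows(1) unfolding Pi_dec_def tdec_sub by (auto simp: Tk_def)
qed

lemma nu_nonempty: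
  assumes r: "r \<in> trows (Tk k)"
  shows "nu k r \<noteq> {}"
proof (cases "r 1 = 0")
  case True
  then have "0 \<in> nu k r"
    by (simp add: nu_def)
  then show ?thesis by blast
next
  case False
  have binary: "r i = 0 \<or> r i = 1" if "i \<in> {1..m k}" for i
    using r that by (auto simp: trows_Tk)
  have "1 \<in> {1..m k}"
    using r False by (auto simp: trows_Tk)
  then have "k \<ge> 1"
    by (cases k) (simp_all add: m_def)
  have "idx 1 1 = (1::nat)"
    by (simp add: idx_def)
  moreover have "r 1 = 1"
    using binary[OF \<open>1 \<in> {1..m k}\<close>] False by blast
  ultimately have "r (idx 1 1) = 1"
    by (rule ssubst)
  define layers where "layers = {s. 1 \<le> s \<and> s \<le> k \<and> (\<exists>j. 1 \<le> j \<and> j \<le> s \<and> r (idx s j) = 1)}"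
  define s0 where "s0 = Max layers"
  have "finite layers" "1 \<in> layers"
    using \<open>k \<ge> 1\<close> \<open>r (idx 1 1) = 1\<close> by (auto simp: layers_def)
  then have "s0 \<in> layers" and below_s0: "\<And>s. s \<in> layers \<Longrightarrow> s \<le> s0"
    unfolding s0_def by (auto intro: Max_in)
  then obtain j where j: "1 \<le> s0" "s0 \<le> k" "1 \<le> j" "j \<le> s0" "r (idx s0 j) = 1"
    unfolding layers_def by blast
  show ?thesis
  proof (cases "s0 = k")
    case True
    with j have "idx k j \<in> nu k r"
      unfolding nu_def by blast
    then show ?thesis by blast
  next
    case False
    have children: "r (idx (s0 + 1) c) = 0" if "1 \<le> c" "c \<le> s0 + 1" for c
    proof -
      have "s0 + 1 \<notin> layers"
        using below_s0 by fastforce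
      moreover have "1 \<le> s0 + 1" "s0 + 1 \<le> k"
        using j(2) False by simp_all
      ultimately have "r (idx (s0 + 1) c) \<noteq> 1"
        using that unfolding layers_def by blast
      moreover have "idx (s0 + 1) c \<in> {1..m k}"
        using that j False by (intro idx_mem_atts) auto
      ultimately show ?thesis
        using binary by blast
    qed
    have "r (idx (s0 + 1) j) = 0" "r (idx (s0 + 1) (j + 1)) = 0"
      using children[of j] children[of "j + 1"] j(3,4) by simp_all
    moreover have "s0 < k"
      using j(2) False by simp
    ultimately have "idx s0 j \<in> nu k r"
      using j unfolding nu_def by blast
    then show ?thesis by blast
  qed
qed

lemma Tk_has_det_tree: "\<exists>\<Gamma>. det_tree (Tk k) \<Gamma>"
proof (rule det_tree_exists)
  show "r = r'" if "r \<in> trows (Tk k)" "r' \<in> trows (Tk k)" "\<forall>f \<in> tatt (Tk k). r f = r' f" for r r'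
  proof
    fix i
    show "r i = r' i"
      using that by (cases "i \<in> {1..m k}") (auto simp: trows_Tk Tk_def)
  qed
qed (auto simp: Tk_def nu_nonempty)

theorem lemma9:
  fixes k :: nat
  assumes "k \<ge> 1"
  shows "h_det (Tk k) \<ge> k - 1"
proof (rule h_det_lower_bound[OF Tk_has_det_tree])
  fix \<Gamma> assume "det_tree (Tk k) \<Gamma>"
  then show "k - 1 \<le> depth \<Gamma>"
    by (rule adversary_depth_bound[OF adversary_inv_Nil _ adversary_inv_snoc
          adversary_inv_rows_nonempty adversary_inv_undecided])
qed

end
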